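(* Let $U,K\ge1$ and $t_{ji}\in(0,1]$ for $j=1,\ldots,U$, $i=1,\ldots,K$. Consider the POMDP with world states $w_{10}$ and $w_{ji}$ ($j=1,\ldots,U$, $i=1,\ldots,K$), actions $A=\{1,\ldots,K\}$, and sensor states $S=\{1,\ldots,U\}$, where (setting $w_{j,0}:=w_{j-1,K}$ for $j\ge2$) world state $w_{j,i-1}$ is deterministically sensed as $s=j$ for all $j=1,\ldots,U$, $i=1,\ldots,K$, and $w_{UK}$ is sensed as $s=1$. From $w_{j,i-1}$, action $i$ takes the agent to $w_{ji}$ with probability $t_{ji}$ and to $w_{10}$ with probability $1-t_{ji}$, and every other action takes it to $w_{10}$; from $w_{UK}$ every action takes it to $w_{10}$. The reward is $1$ at $w_{UK}$ and $0$ elsewhere. Write $\pi_{ji}=\pi(a=i|s=j)$. The optimal memoryless policy (maximizer of the average reward $p^\pi(w_{UK})$) is given, for $j=1,\ldots,U$, by $\pi_{j1}=c_jd_j$ and $\pi_{ji}=\pi_{j,i-1}+c_je_j\,t_{j1}\pi_{j1}\cdots t_{j,i-1}\pi_{j,i-1}$ for $i=2,\ldots,K$, where $d_j=1+t_{11}\pi_{11}+\cdots+t_{11}\pi_{11}\cdots t_{j-1,K}\pi_{j-1,K}$ (the sum of $1$ and all products $t_{11}\pi_{11}\cdots t_{kl}\pi_{kl}$ over indices $(k,l)$ preceding $(j,1)$ in the order $(1,1),\ldots,(1,K),(2,1),\ldots$), $e_j=t_{11}\pi_{11}\cdots t_{j-1,K}\pi_{j-1,K}$, and $c_j$ is the unique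 real positive solution of $\pi_{j1}+\cdots+\pi_{jK}=1$. Empty products are $1$ and empty sums $0$.
   Context: Under a stationary policy $\pi$ the world states form a Markov chain; $p^\pi$ denotes its stationary distribution and the expected reward per time step is $p^\pi(w_{UK})$. Note $d_j,e_j$ depend only on the policy entries for sensor states $1,\ldots,j-1$, so the $c_j$ and $\pi_{j\cdot}$ are determined successively for $j=1,\ldots,U$. *)

theory Defs
  imports Complex_Main
begin

text \<open>World states are encoded as natural numbers 0..U*K:
  state 0 is w_{10}, and state (j-1)*K + i is w_{ji} (1 <= j <= U, 1 <= i <= K).
  This encoding automatically realises the identification w_{j,0} = w_{j-1,K}.  A memoryless policy is
  pol j i = pi(a = i | s = j).\<close>

definition sense :: "nat \<Rightarrow> nat \<Rightarrow> nat \<Rightarrow> nat" where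
  "sense U K n = (if n = U * K then 1 else n div K + 1)"

definition trans :: "nat \<Rightarrow> nat \<Rightarrow> (nat \<Rightarrow> nat \<Rightarrow> real) \<Rightarrow> nat \<Rightarrow> nat \<Rightarrow> nat \<Rightarrow> real" where
  "trans U K t n a m =
     (if n < U * K then
        (if a = n mod K + 1 then
           (if m = Suc n then t (n div K + 1) a else 0)
           + (if m = 0 then 1 - t (n div K + 1) a else 0)
         else (if m = 0 then 1 else 0))
      else (if m = 0 then 1 else 0))"

definition chain :: "nat \<Rightarrow> nat \<Rightarrow> (nat \<Rightarrow> nat \<Rightarrow> real) \<Rightarrow> (nat \<Rightarrow> nat \<Rightarrow> real)
                      \<Rightarrow> nat \<Rightarrow> nat \<Rightarrow> real" where
  "chain U K t pol n m = (\<Sum>a\<in>{1..K}. pol (sense U K n) a * trans U K t n a m)"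

definition is_stationary :: "nat \<Rightarrow> nat \<Rightarrow> (nat \<Rightarrow> nat \<Rightarrow> real) \<Rightarrow> (nat \<Rightarrow> nat \<Rightarrow> real)
                             \<Rightarrow> (nat \<Rightarrow> real) \<Rightarrow> bool" where
  "is_stationary U K t pol p \<longleftrightarrow>
     (\<forall>n. U * K < n \<longrightarrow> p n = 0) \<and>
     (\<forall>n\<le>U * K. 0 \<le> p n) \<and>
     (\<Sum>n\<le>U * K. p n) = 1 \<and>
     (\<forall>m\<le>U * K. (\<Sum>n\<le>U * K. p n * chain U K t pol n m) = p m)"

text \<open>The stationary distribution p^pi (unique for valid policies).\<close>
definition stat_dist :: "nat \<Rightarrow> nat \<Rightarrow> (nat \<Rightarrow> nat \<Rightarrow> real) \<Rightarrow> (nat \<Rightarrow> nat \<Rightarrow> real) \<Rightarrow> nat \<Rightarrow> real" where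
  "stat_dist U K t pol = (THE p. is_stationary U K t pol p)"

definition avg_reward :: "nat \<Rightarrow> nat \<Rightarrow> (nat \<Rightarrow> nat \<Rightarrow> real) \<Rightarrow> (nat \<Rightarrow> nat \<Rightarrow> real) \<Rightarrow> real" where
  "avg_reward U K t pol = stat_dist U K t pol (U * K)"

definition valid_policy :: "nat \<Rightarrow> nat \<Rightarrow> (nat \<Rightarrow> nat \<Rightarrow> real) \<Rightarrow> bool" where
  "valid_policy U K pol \<longleftrightarrow>
     (\<forall>j\<in>{1..U}. (\<forall>i\<in>{1..K}. 0 \<le> pol j i) \<and> (\<Sum>i=1..K. pol j i) = 1)"

definition prefix_prod :: "nat \<Rightarrow> (nat \<Rightarrow> nat \<Rightarrow> real) \<Rightarrow> (nat \<Rightarrow> nat \<Rightarrow> real) \<Rightarrow> nat \<Rightarrow> real" where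
  "prefix_prod K t pol m =
     (\<Prod>r\<in>{1..m}. t ((r - 1) div K + 1) ((r - 1) mod K + 1)
                  * pol ((r - 1) div K + 1) ((r - 1) mod K + 1))"

definition d_par :: "nat \<Rightarrow> (nat \<Rightarrow> nat \<Rightarrow> real) \<Rightarrow> (nat \<Rightarrow> nat \<Rightarrow> real) \<Rightarrow> nat \<Rightarrow> real" where
  "d_par K t pol j = (\<Sum>m\<in>{0..(j - 1) * K}. prefix_prod K t pol m)"

definition e_par :: "nat \<Rightarrow> (nat \<Rightarrow> nat \<Rightarrow> real) \<Rightarrow> (nat \<Rightarrow> nat \<Rightarrow> real) \<Rightarrow> nat \<Rightarrow> real" where
  "e_par K t pol j = prefix_prod K t pol ((j - 1) * K)"

definition opt_rec :: "nat \<Rightarrow> nat \<Rightarrow> (nat \<Rightarrow> nat \<Rightarrow> real) \<Rightarrow> (nat \<Rightarrow> nat \<Rightarrow> real)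
                       \<Rightarrow> (nat \<Rightarrow> real) \<Rightarrow> bool" where
  "opt_rec U K t pol c \<longleftrightarrow>
     (\<forall>j\<in>{1..U}.
        0 < c j \<and>
        pol j 1 = c j * d_par K t pol j \<and>
        (\<forall>i\<in>{2..K}. pol j i = pol j (i - 1)
             + c j * e_par K t pol j * (\<Prod>l\<in>{1..i - 1}. t j l * pol j l)) \<and>
        (\<Sum>i=1..K. pol j i) = 1)"

end

theory Submission
  imports Defs
begin

text \<open>Under a policy the world states form a renewal chain on \<open>0, \<dots>, U K\<close>: from state \<open>r\<close>
  the agent advances with probability \<open>x\<^sub>r = t\<^sub>j\<^sub>i \<pi>\<^sub>j\<^sub>i\<close> and otherwise restarts, so the
  average reward is \<open>P\<^sub>U\<^sub>K / (P\<^sub>0 + \<dots> + P\<^sub>U\<^sub>K)\<close> with \<open>P\<^sub>m = x\<^sub>0 \<cdots> x\<^sub>m\<^sub>-\<^sub>1\<close>. As a function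
  of the logarithms of the \<open>x\<^sub>r\<close> this is log-concave, with gradient \<open>S\<^sub>r / S\<close> where
  \<open>S\<^sub>r = P\<^sub>0 + \<dots> + P\<^sub>r\<close>. The recursion of the proposition says exactly \<open>\<pi>\<^sub>r = c\<^sub>j S\<^sub>r\<close> in
  block \<open>j\<close>, so for any policy \<open>\<pi>'\<close> the first-order term
  \<open>\<Sum> S\<^sub>r ln (\<pi>'\<^sub>r / \<pi>\<^sub>r) \<le> \<Sum> (\<pi>'\<^sub>r - \<pi>\<^sub>r) / c\<^sub>j = 0\<close> and \<open>\<pi>\<close> is optimal.
  Within a block the row sum is continuous and strictly increasing in \<open>c\<^sub>j\<close>, vanishes at
  \<open>0\<close> and is at least \<open>1\<close> at \<open>1 / d\<^sub>j\<close>; this determines the \<open>c\<^sub>j\<close> block by block.\<close>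

section \<open>Renewal chains\<close>

lemma sum_mult_le_ln_sum_mult_exp:
  fixes w L :: "'a \<Rightarrow> real"
  assumes A: "finite A" and w: "\<forall>a\<in>A. 0 \<le> w a" and W: "0 < sum w A"
  shows "(\<Sum>a\<in>A. w a * L a) \<le> sum w A * ln ((\<Sum>a\<in>A. w a * exp (L a)) / sum w A)"
proof -
  define T where "T = (\<Sum>a\<in>A. w a * exp (L a))"
  define Z where "Z = T / sum w A"
  obtain b where b: "b \<in> A" "0 < w b"
    using W sum_nonpos[of A w] by (meson not_le)
  have "w b * exp (L b) \<le> T"
    unfolding T_def using A b w by (intro member_le_sum) auto
  moreover have "0 < w b * exp (L b)" using b by simp
  ultimately have T: "0 < T" by linarith
  then have Z: "0 < Z" unfolding Z_def using W by simp
  have "w a * L a \<le> w a * ln Z + w a * (exp (L a) / Z - 1)" if "a \<in> A" for a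
  proof -
    have "L a - ln Z = ln (exp (L a) / Z)" using Z by (simp add: ln_div)
    also have "\<dots> \<le> exp (L a) / Z - 1" using Z by (intro ln_le_minus_one) simp
    finally have "w a * (L a - ln Z) \<le> w a * (exp (L a) / Z - 1)"
      using w that by (intro mult_left_mono) auto
    then show ?thesis by (simp add: algebra_simps)
  qed
  then have "(\<Sum>a\<in>A. w a * L a) \<le> (\<Sum>a\<in>A. w a * ln Z + w a * (exp (L a) / Z - 1))"
    by (rule sum_mono)
  also have "\<dots> = sum w A * ln Z + (T / Z - sum w A)"
    unfolding T_def
    by (simp add: sum.distrib sum_distrib_right[symmetric] right_diff_distrib sum_subtractf
        sum_divide_distrib[symmetric] times_divide_eq_right)
  also have "T / Z = sum w A" unfolding Z_def using T W by simp
  finally show ?thesis by (simp add: Z_def T_def)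
qed

lemma mult_ln_ratio_le_diff_div:
  fixes c p p' S :: real
  assumes "0 < c" and "0 < p" and "0 < p'" and "p = c * S"
  shows "S * ln (p' / p) \<le> (p' - p) / c"
proof -
  have S: "0 < S" using assms by (simp add: zero_less_mult_iff)
  have "S * ln (p' / p) \<le> S * (p' / p - 1)"
    using assms(2,3) S by (intro mult_left_mono ln_le_minus_one) auto
  also have "\<dots> = (p' - p) / c" using assms(1,4) S by (simp add: field_simps)
  finally show ?thesis .
qed

lemma sum_mult_partial_sum_swap:
  fixes f g :: "nat \<Rightarrow> real"
  shows "(\<Sum>m\<le>N. f m * (\<Sum>r<m. g r)) = (\<Sum>r<N. g r * ((\<Sum>m\<le>N. f m) - (\<Sum>m\<le>r. f m)))"
proof (induction N)
  case (Suc N)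
  have "(\<Sum>r<Suc N. g r * ((\<Sum>m\<le>Suc N. f m) - (\<Sum>m\<le>r. f m)))
      = (\<Sum>r<N. g r * ((\<Sum>m\<le>N. f m) - (\<Sum>m\<le>r. f m)) + f (Suc N) * g r) + g N * f (Suc N)"
    by (simp add: algebra_simps)
  also have "\<dots> = (\<Sum>r<N. g r * ((\<Sum>m\<le>N. f m) - (\<Sum>m\<le>r. f m)))
                  + f (Suc N) * (\<Sum>r<N. g r) + g N * f (Suc N)"
    by (simp add: sum.distrib sum_distrib_left)
  finally show ?case using Suc by (simp add: algebra_simps)
qed simp

lemma one_le_sum_prod_lessThan:
  fixes x :: "nat \<Rightarrow> real"
  assumes "\<forall>r<n. 0 \<le> x r"
  shows "1 \<le> (\<Sum>k\<le>n. \<Prod>r<k. x r)"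
  using assms
proof (induction n)
  case (Suc n)
  have "0 \<le> (\<Prod>r<Suc n. x r)" using Suc.prems by (intro prod_nonneg) auto
  then show ?case using Suc by simp
qed simp

definition renewal_distribution :: "nat \<Rightarrow> (nat \<Rightarrow> real) \<Rightarrow> nat \<Rightarrow> real" where
  "renewal_distribution N x m = (if m \<le> N then (\<Prod>r<m. x r) / (\<Sum>k\<le>N. \<Prod>r<k. x r) else 0)"

lemma renewal_distribution_pos:
  assumes "\<forall>r<N. 0 < x r" and "m \<le> N"
  shows "0 < renewal_distribution N x m"
proof -
  have "0 < (\<Prod>r<m. x r)" using assms by (intro prod_pos) auto
  moreover have "1 \<le> (\<Sum>k\<le>N. \<Prod>r<k. x r)"
    using assms(1) by (intro one_le_sum_prod_lessThan) (simp add: less_imp_le)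
  ultimately show ?thesis using assms(2) by (simp add: renewal_distribution_def)
qed

lemma prod_eq_prod_mult_exp_sum_ln_ratio:
  fixes x y :: "nat \<Rightarrow> real"
  assumes "\<forall>k<m. 0 < x k" and "\<forall>k<m. 0 < y k"
  shows "(\<Prod>k<m. y k) = (\<Prod>k<m. x k) * exp (\<Sum>k<m. ln (y k / x k))"
proof -
  have "(\<Prod>k<m. x k) * exp (\<Sum>k<m. ln (y k / x k)) = (\<Prod>k<m. x k * (y k / x k))"
    unfolding exp_sum[OF finite_lessThan] prod.distrib[symmetric]
    using assms by (intro prod.cong) auto
  also have "\<dots> = (\<Prod>k<m. y k)"
    using assms(1) by (intro prod.cong) (auto simp: less_imp_neq[symmetric])
  finally show ?thesis ..
qed

text \<open>Convexity of \<open>u \<mapsto> ln (\<Sum>m\<le>N. exp (u\<^sub>0 + \<dots> + u\<^sub>m\<^sub>-\<^sub>1))\<close> at \<open>u = ln x\<close>, in direction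
  \<open>ln y - ln x\<close>; the derivative of that function is \<open>1 - S\<^sub>r / S\<close> in coordinate \<open>r\<close>.\<close>

lemma sum_ln_ratio_le_ln_sum_prod_ratio:
  fixes x y :: "nat \<Rightarrow> real"
  assumes x: "\<forall>r<N. 0 < x r" and y: "\<forall>r<N. 0 < y r"
  shows "(\<Sum>r<N. ln (y r / x r))
           - (\<Sum>r<N. (\<Sum>m\<le>r. \<Prod>k<m. x k) * ln (y r / x r)) / (\<Sum>m\<le>N. \<Prod>k<m. x k)
         \<le> ln ((\<Sum>m\<le>N. \<Prod>k<m. y k) / (\<Sum>m\<le>N. \<Prod>k<m. x k))"
proof -
  define P where "P m = (\<Prod>k<m. x k)" for m
  define S where "S = (\<Sum>m\<le>N. P m)"
  define L where "L m = (\<Sum>r<m. ln (y r / x r))" for m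
  have S: "1 \<le> S" unfolding S_def P_def using x by (intro one_le_sum_prod_lessThan) auto
  have "(\<Sum>m\<le>N. P m * exp (L m)) = (\<Sum>m\<le>N. \<Prod>k<m. y k)"
    unfolding P_def L_def using x y
    by (intro sum.cong refl prod_eq_prod_mult_exp_sum_ln_ratio[symmetric]) auto
  moreover have "0 \<le> P m" if "m \<le> N" for m
    unfolding P_def using x that by (intro prod_nonneg) (simp add: less_imp_le)
  then have "(\<Sum>m\<le>N. P m * L m) \<le> S * ln ((\<Sum>m\<le>N. P m * exp (L m)) / S)"
    unfolding S_def using S by (intro sum_mult_le_ln_sum_mult_exp) (auto simp: S_def)
  moreover have "(\<Sum>m\<le>N. P m * L m) = (\<Sum>r<N. ln (y r / x r) * (S - (\<Sum>m\<le>r. P m)))"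
    unfolding L_def S_def by (rule sum_mult_partial_sum_swap)
  moreover have "\<dots> = S * L N - (\<Sum>r<N. (\<Sum>m\<le>r. P m) * ln (y r / x r))"
    unfolding L_def by (simp add: algebra_simps sum_subtractf sum_distrib_left)
  ultimately have "S * L N - (\<Sum>r<N. (\<Sum>m\<le>r. P m) * ln (y r / x r))
                     \<le> S * ln ((\<Sum>m\<le>N. \<Prod>k<m. y k) / S)"
    by simp
  then show ?thesis using S by (simp add: field_simps L_def P_def S_def)
qed

lemma ln_renewal_distribution_le_tangent:
  fixes x y :: "nat \<Rightarrow> real"
  assumes x: "\<forall>r<N. 0 < x r" and y: "\<forall>r<N. 0 < y r"
  shows "ln (renewal_distribution N y N)
           \<le> ln (renewal_distribution N x N)
             + (\<Sum>r<N. (\<Sum>m\<le>r. \<Prod>k<m. x k) * ln (y r / x r)) / (\<Sum>m\<le>N. \<Prod>k<m. x k)"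
proof -
  define S where "S = (\<Sum>m\<le>N. \<Prod>k<m. x k)"
  define S' where "S' = (\<Sum>m\<le>N. \<Prod>k<m. y k)"
  have S: "1 \<le> S" "1 \<le> S'"
    unfolding S_def S'_def using x y by (simp_all add: one_le_sum_prod_lessThan less_imp_le)
  define L where "L = (\<Sum>k<N. ln (y k / x k))"
  define P where "P = (\<Prod>k<N. x k)"
  have P: "0 < P" unfolding P_def using x by (intro prod_pos) auto
  have "renewal_distribution N y N = P * exp L / S'"
    using prod_eq_prod_mult_exp_sum_ln_ratio[of N x y] x y
    by (simp add: renewal_distribution_def S'_def L_def P_def)
  then have "ln (renewal_distribution N y N) = ln P + L - ln S'"
    using P S by (simp add: ln_div ln_mult)
  moreover have "ln (renewal_distribution N x N) = ln P - ln S"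
    using P S by (simp add: renewal_distribution_def S_def P_def[symmetric] ln_div)
  moreover have "ln (S' / S) = ln S' - ln S" using S by (simp add: ln_div)
  ultimately show ?thesis
    using sum_ln_ratio_le_ln_sum_prod_ratio[OF x y, folded L_def S_def S'_def]
    by (simp add: S_def)
qed

definition renewal_matrix :: "nat \<Rightarrow> (nat \<Rightarrow> real) \<Rightarrow> (nat \<Rightarrow> nat \<Rightarrow> real) \<Rightarrow> bool" where
  "renewal_matrix N x M \<longleftrightarrow>
     (\<forall>n<N. M n (Suc n) = x n \<and> M n 0 = 1 - x n) \<and> M N 0 = 1 \<and>
     (\<forall>n\<le>N. \<forall>m. m \<noteq> 0 \<longrightarrow> m \<noteq> Suc n \<longrightarrow> M n m = 0)"

definition stationary_distribution :: "nat \<Rightarrow> (nat \<Rightarrow> nat \<Rightarrow> real) \<Rightarrow> (nat \<Rightarrow> real) \<Rightarrow> bool" where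
  "stationary_distribution N M p \<longleftrightarrow>
     (\<forall>n. N < n \<longrightarrow> p n = 0) \<and> (\<forall>n\<le>N. 0 \<le> p n) \<and> (\<Sum>n\<le>N. p n) = 1 \<and>
     (\<forall>m\<le>N. (\<Sum>n\<le>N. p n * M n m) = p m)"

lemma renewal_matrix_balance:
  assumes "renewal_matrix N x M" and "0 < m" and "m \<le> N"
  shows "(\<Sum>n\<le>N. q n * M n m) = q (m - 1) * x (m - 1)"
proof -
  obtain k where m: "m = Suc k" using assms(2) gr0_conv_Suc by blast
  have "(\<Sum>n\<le>N. q n * M n m) = (\<Sum>n\<le>N. if n = k then q k * x k else 0)"
    using assms(1,3) unfolding m by (intro sum.cong) (auto simp: renewal_matrix_def)
  also have "\<dots> = q k * x k" using assms(3) m by simp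
  finally show ?thesis unfolding m by simp
qed

lemma renewal_matrix_balance_0:
  assumes "renewal_matrix N x M"
  shows "(\<Sum>n\<le>N. q n * M n 0) = (\<Sum>n<N. q n * (1 - x n)) + q N"
  using assms by (simp add: renewal_matrix_def lessThan_Suc_atMost[symmetric])

lemma stationary_renewal_distribution:
  assumes M: "renewal_matrix N x M" and x: "\<forall>n<N. 0 \<le> x n"
  shows "stationary_distribution N M (renewal_distribution N x)"
proof -
  define S where "S = (\<Sum>k\<le>N. \<Prod>r<k. x r)"
  have S: "1 \<le> S" unfolding S_def using x by (rule one_le_sum_prod_lessThan)
  let ?p = "renewal_distribution N x"
  have p_Suc: "?p (Suc n) = ?p n * x n" if "n < N" for n
    using that by (simp add: renewal_distribution_def)
  have "(\<Sum>n\<le>N. ?p n * M n 0) = ?p 0"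
  proof -
    have "(\<Sum>n<N. ?p n * (1 - x n)) = (\<Sum>n<N. ?p n - ?p (Suc n))"
      using p_Suc by (intro sum.cong) (auto simp: algebra_simps)
    then have "(\<Sum>n\<le>N. ?p n * M n 0) = (\<Sum>n<N. ?p n - ?p (Suc n)) + ?p N"
      using renewal_matrix_balance_0[OF M] by simp
    also have "\<dots> = ?p 0"
      by (simp add: sum_lessThan_telescope')
    finally show ?thesis .
  qed
  moreover have "(\<Sum>n\<le>N. ?p n) = 1"
    using S by (simp add: renewal_distribution_def sum_divide_distrib[symmetric] S_def)
  moreover have "0 \<le> ?p n" for n
    using x S by (auto simp: renewal_distribution_def S_def intro!: divide_nonneg_pos prod_nonneg)
  moreover have "(\<Sum>n\<le>N. ?p n * M n m) = ?p m" if "0 < m" "m \<le> N" for m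
    using renewal_matrix_balance[OF M that] p_Suc[of "m - 1"] that by simp
  moreover have "?p n = 0" if "N < n" for n
    using that by (simp add: renewal_distribution_def)
  ultimately show ?thesis
    unfolding stationary_distribution_def by (metis neq0_conv)
qed

lemma stationary_distribution_renewal_unique:
  assumes M: "renewal_matrix N x M" and x: "\<forall>n<N. 0 \<le> x n"
    and p: "stationary_distribution N M p"
  shows "p = renewal_distribution N x"
proof
  fix m
  define S where "S = (\<Sum>k\<le>N. \<Prod>r<k. x r)"
  have S: "1 \<le> S" unfolding S_def using x by (rule one_le_sum_prod_lessThan)
  have p_eq: "p k = p 0 * (\<Prod>r<k. x r)" if "k \<le> N" for k
    using that
  proof (induction k)
    case (Suc k)
    have "p (Suc k) = p k * x k"
    proof -
      have "(\<Sum>n\<le>N. p n * M n (Suc k)) = p (Suc k)"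
        using p Suc.prems unfolding stationary_distribution_def by blast
      then show ?thesis using renewal_matrix_balance[OF M, of "Suc k" p] Suc.prems by simp
    qed
    then show ?case using Suc by simp
  qed simp
  have "(\<Sum>k\<le>N. p k) = (\<Sum>k\<le>N. p 0 * (\<Prod>r<k. x r))"
    by (rule sum.cong[OF refl], rule p_eq) simp
  then have "p 0 * S = 1"
    using p unfolding stationary_distribution_def S_def by (simp add: sum_distrib_left)
  then have p0: "p 0 = 1 / S" using S by (simp add: eq_divide_eq)
  show "p m = renewal_distribution N x m"
  proof (cases "m \<le> N")
    case True
    then show ?thesis using p_eq[of m] p0 by (simp add: renewal_distribution_def S_def)
  next
    case False
    then show ?thesis using p by (simp add: renewal_distribution_def stationary_distribution_def)
  qed
qed

section \<open>The recursion within a block\<close>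

text \<open>\<open>block_state \<tau> D E c i = (S\<^sub>i, \<tau>\<^sub>1\<pi>\<^sub>1\<cdots>\<tau>\<^sub>i\<pi>\<^sub>i)\<close>, where \<open>\<pi>\<^sub>i\<^sub>+\<^sub>1 = c S\<^sub>i\<close> (this is \<open>block_row\<close>),
  \<open>S\<^sub>0 = D\<close> and \<open>S\<^sub>i = S\<^sub>i\<^sub>-\<^sub>1 + E \<tau>\<^sub>1\<pi>\<^sub>1\<cdots>\<tau>\<^sub>i\<pi>\<^sub>i\<close>. For \<open>D = d\<^sub>j\<close>, \<open>E = e\<^sub>j\<close>, \<open>c = c\<^sub>j\<close> this is the
  recursion of the proposition in block \<open>j\<close>, and \<open>S\<^sub>i\<close> is the cumulative weight \<open>cum_weight\<close> at
  the \<open>(i+1)\<close>-st position of the block.\<close>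

fun block_state :: "(nat \<Rightarrow> real) \<Rightarrow> real \<Rightarrow> real \<Rightarrow> real \<Rightarrow> nat \<Rightarrow> real \<times> real" where
  "block_state \<tau> D E c 0 = (D, 1)"
| "block_state \<tau> D E c (Suc i) =
     (let s = block_state \<tau> D E c i; Q = snd s * (\<tau> (Suc i) * (c * fst s)) in (fst s + E * Q, Q))"

lemma block_state_Suc:
  "snd (block_state \<tau> D E c (Suc i))
     = snd (block_state \<tau> D E c i) * (\<tau> (Suc i) * (c * fst (block_state \<tau> D E c i)))"
  "fst (block_state \<tau> D E c (Suc i))
     = fst (block_state \<tau> D E c i) + E * snd (block_state \<tau> D E c (Suc i))"
  by (simp_all add: Let_def)

declare block_state.simps(2) [simp del]

definition block_row :: "(nat \<Rightarrow> real) \<Rightarrow> real \<Rightarrow> real \<Rightarrow> real \<Rightarrow> nat \<Rightarrow> real" where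
  "block_row \<tau> D E c i = c * fst (block_state \<tau> D E c (i - 1))"

definition block_sum :: "nat \<Rightarrow> (nat \<Rightarrow> real) \<Rightarrow> real \<Rightarrow> real \<Rightarrow> real \<Rightarrow> real" where
  "block_sum K \<tau> D E c = (\<Sum>i=1..K. block_row \<tau> D E c i)"

lemma block_state_snd_eq:
  assumes "\<forall>l\<in>{1..i}. \<rho> l = block_row \<tau> D E c l"
  shows "snd (block_state \<tau> D E c i) = (\<Prod>l=1..i. \<tau> l * \<rho> l)"
  using assms
proof (induction i)
  case (Suc i)
  then show ?case by (simp add: block_state_Suc block_row_def mult_ac)
qed simp

lemma block_row_if_block_recursion:
  assumes "\<rho> 1 = c * D"
    and "\<forall>i\<in>{2..K}. \<rho> i = \<rho> (i - 1) + c * E * (\<Prod>l=1..i - 1. \<tau> l * \<rho> l)"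
  shows "\<forall>i\<in>{1..K}. \<rho> i = block_row \<tau> D E c i"
proof -
  have "i \<le> K \<Longrightarrow> \<forall>l\<in>{1..i}. \<rho> l = block_row \<tau> D E c l" for i
  proof (induction i)
    case (Suc i)
    then have IH: "\<forall>l\<in>{1..i}. \<rho> l = block_row \<tau> D E c l" by simp
    show ?case
    proof (cases i)
      case 0
      then show ?thesis using assms(1) by (simp add: block_row_def)
    next
      case (Suc i')
      have "\<rho> (Suc i) = \<rho> i + c * E * (\<Prod>l=1..i. \<tau> l * \<rho> l)"
        using assms(2) Suc.prems Suc by simp
      also have "\<dots> = c * (fst (block_state \<tau> D E c i') + E * snd (block_state \<tau> D E c i))"
        using IH Suc block_state_snd_eq[OF IH] by (simp add: block_row_def algebra_simps)
      also have "\<dots> = block_row \<tau> D E c (Suc i)"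
        using Suc by (simp add: block_row_def block_state_Suc(2)[of \<tau> D E c i', symmetric])
      finally show ?thesis using IH by (auto simp: le_Suc_eq)
    qed
  qed simp
  then show ?thesis by auto
qed

lemma block_recursion_if_block_row:
  assumes "1 \<le> K" and row: "\<forall>i\<in>{1..K}. \<rho> i = block_row \<tau> D E c i"
  shows "\<rho> 1 = c * D"
    and "\<forall>i\<in>{2..K}. \<rho> i = \<rho> (i - 1) + c * E * (\<Prod>l=1..i - 1. \<tau> l * \<rho> l)"
proof -
  show "\<rho> 1 = c * D" using row assms(1) by (simp add: block_row_def)
  show "\<forall>i\<in>{2..K}. \<rho> i = \<rho> (i - 1) + c * E * (\<Prod>l=1..i - 1. \<tau> l * \<rho> l)"
  proof
    fix i assume i: "i \<in> {2..K}"
    obtain i' where i': "i = Suc (Suc i')" using i by (cases i; cases "i - 1") auto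
    have "\<forall>l\<in>{1..Suc i'}. \<rho> l = block_row \<tau> D E c l" using row i i' by auto
    then have "(\<Prod>l=1..i - 1. \<tau> l * \<rho> l) = snd (block_state \<tau> D E c (Suc i'))"
      using i' by (simp add: block_state_snd_eq)
    moreover have "\<rho> i = c * fst (block_state \<tau> D E c (Suc i'))"
      using row i i' by (simp add: block_row_def)
    moreover have "\<rho> (i - 1) = c * fst (block_state \<tau> D E c i')"
      using row i i' by (simp add: block_row_def)
    ultimately show "\<rho> i = \<rho> (i - 1) + c * E * (\<Prod>l=1..i - 1. \<tau> l * \<rho> l)"
      by (simp add: block_state_Suc(2) algebra_simps)
  qed
qed

lemma block_state_bounds:
  assumes "0 \<le> D" "0 \<le> E" "0 \<le> c" "\<forall>l\<in>{1..i}. 0 \<le> \<tau> l"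
  shows "D \<le> fst (block_state \<tau> D E c i)" and "0 \<le> snd (block_state \<tau> D E c i)"
proof -
  have "D \<le> fst (block_state \<tau> D E c i) \<and> 0 \<le> snd (block_state \<tau> D E c i)"
    using assms(4)
  proof (induction i)
    case (Suc i)
    then have "D \<le> fst (block_state \<tau> D E c i)" "0 \<le> snd (block_state \<tau> D E c i)" "0 \<le> \<tau> (Suc i)"
      by auto
    moreover from this assms(1,3) have "0 \<le> snd (block_state \<tau> D E c (Suc i))"
      by (simp add: block_state_Suc(1))
    ultimately show ?case using assms(2) by (simp add: block_state_Suc(2) add_increasing2)
  qed simp
  then show "D \<le> fst (block_state \<tau> D E c i)" and "0 \<le> snd (block_state \<tau> D E c i)" by auto
qed

lemma block_row_pos:
  assumes "0 < D" "0 \<le> E" "0 < c" "\<forall>l\<in>{1..i - 1}. 0 \<le> \<tau> l"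
  shows "0 < block_row \<tau> D E c i"
proof -
  have "D \<le> fst (block_state \<tau> D E c (i - 1))"
    using block_state_bounds(1)[OF _ assms(2) _ assms(4)] assms(1,3) by simp
  then show ?thesis using assms(1,3) by (simp add: block_row_def)
qed

lemma block_state_mono:
  assumes "0 \<le> D" "0 \<le> E" "0 \<le> c" "c \<le> c'" "\<forall>l\<in>{1..i}. 0 \<le> \<tau> l"
  shows "fst (block_state \<tau> D E c i) \<le> fst (block_state \<tau> D E c' i)"
    and "snd (block_state \<tau> D E c i) \<le> snd (block_state \<tau> D E c' i)"
proof -
  have "fst (block_state \<tau> D E c i) \<le> fst (block_state \<tau> D E c' i)
        \<and> snd (block_state \<tau> D E c i) \<le> snd (block_state \<tau> D E c' i)"
    using assms(5)
  proof (induction i)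
    case (Suc i)
    then have IH: "fst (block_state \<tau> D E c i) \<le> fst (block_state \<tau> D E c' i)"
      "snd (block_state \<tau> D E c i) \<le> snd (block_state \<tau> D E c' i)" and \<tau>: "0 \<le> \<tau> (Suc i)"
      by auto
    have "D \<le> fst (block_state \<tau> D E c i)" "0 \<le> snd (block_state \<tau> D E c i)"
      using block_state_bounds[OF assms(1-3)] Suc.prems by auto
    then have "snd (block_state \<tau> D E c (Suc i)) \<le> snd (block_state \<tau> D E c' (Suc i))"
      unfolding block_state_Suc(1) using IH \<tau> assms(1,3,4)
      by (intro mult_mono) (auto intro!: mult_mono)
    with IH assms(2) show ?case by (simp add: block_state_Suc(2) add_mono mult_left_mono)
  qed simp
  then show "fst (block_state \<tau> D E c i) \<le> fst (block_state \<tau> D E c' i)"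
    and "snd (block_state \<tau> D E c i) \<le> snd (block_state \<tau> D E c' i)" by auto
qed

lemma block_sum_strict_mono:
  assumes "0 < D" "0 \<le> E" "0 \<le> c" "c < c'" "\<forall>l\<in>{1..K}. 0 \<le> \<tau> l" "1 \<le> K"
  shows "block_sum K \<tau> D E c < block_sum K \<tau> D E c'"
  unfolding block_sum_def
proof (rule sum_strict_mono)
  fix i assume i: "i \<in> {1..K}"
  have \<tau>: "\<forall>l\<in>{1..i - 1}. 0 \<le> \<tau> l" using assms(5) i by auto
  have "D \<le> fst (block_state \<tau> D E c (i - 1))"
    using block_state_bounds(1)[OF _ assms(2,3) \<tau>] assms(1) by simp
  then have "c * fst (block_state \<tau> D E c (i - 1)) < c' * fst (block_state \<tau> D E c (i - 1))"
    using assms(1,4) by (intro mult_strict_right_mono) auto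
  also have "\<dots> \<le> c' * fst (block_state \<tau> D E c' (i - 1))"
    using block_state_mono(1)[OF _ assms(2,3) _ \<tau>] assms by (intro mult_left_mono) auto
  finally show "block_row \<tau> D E c i < block_row \<tau> D E c' i" by (simp add: block_row_def)
qed (use assms in auto)

lemma continuous_on_block_state:
  "continuous_on UNIV (\<lambda>c. fst (block_state \<tau> D E c i))
   \<and> continuous_on UNIV (\<lambda>c. snd (block_state \<tau> D E c i))"
  by (induction i) (auto simp: block_state_Suc intro!: continuous_intros)

lemma continuous_on_block_sum: "continuous_on UNIV (block_sum K \<tau> D E)"
  unfolding block_sum_def block_row_def
  by (intro continuous_intros continuous_on_mult[OF continuous_on_id]
      continuous_on_block_state[THEN conjunct1])

lemma ex1_block_sum_eq_1:
  assumes "0 < D" "0 \<le> E" "\<forall>l\<in>{1..K}. 0 \<le> \<tau> l" "1 \<le> K"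
  shows "\<exists>!c. 0 < c \<and> block_sum K \<tau> D E c = 1"
proof (rule ex_ex1I)
  have "block_sum K \<tau> D E (1 / D) = 1 + (\<Sum>i=2..K. block_row \<tau> D E (1 / D) i)"
    using assms(1,4) by (simp add: block_sum_def block_row_def sum.atLeast_Suc_atMost numeral_2_eq_2)
  moreover have "0 \<le> (\<Sum>i=2..K. block_row \<tau> D E (1 / D) i)"
  proof (rule sum_nonneg)
    fix i assume "i \<in> {2..K}"
    have "\<forall>l\<in>{1..i - 1}. 0 \<le> \<tau> l" using assms(3) \<open>i \<in> {2..K}\<close> by auto
    then have "D \<le> fst (block_state \<tau> D E (1 / D) (i - 1))"
      using block_state_bounds(1)[of D E "1 / D"] assms(1,2) by simp
    then show "0 \<le> block_row \<tau> D E (1 / D) i" using assms(1) by (simp add: block_row_def)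
  qed
  ultimately have "1 \<le> block_sum K \<tau> D E (1 / D)" by simp
  moreover have "block_sum K \<tau> D E 0 = 0" by (simp add: block_sum_def block_row_def)
  ultimately obtain c where c: "0 \<le> c" "c \<le> 1 / D" "block_sum K \<tau> D E c = 1"
    using IVT'[of "block_sum K \<tau> D E" 0 1 "1 / D"] assms(1)
      continuous_on_subset[OF continuous_on_block_sum subset_UNIV]
    by auto
  moreover have "c \<noteq> 0" using c(3) by (auto simp: block_sum_def block_row_def)
  ultimately show "\<exists>c. 0 < c \<and> block_sum K \<tau> D E c = 1"
    by (intro exI[of _ c]) simp
next
  fix c c' assume "0 < c \<and> block_sum K \<tau> D E c = 1" "0 < c' \<and> block_sum K \<tau> D E c' = 1"
  then show "c = c'"
    using block_sum_strict_mono[OF assms(1,2) _ _ assms(3,4), of c c']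
      block_sum_strict_mono[OF assms(1,2) _ _ assms(3,4), of c' c]
    by (cases c c' rule: linorder_cases) auto
qed

section \<open>The world-state chain as a renewal chain\<close>

definition step_weight :: "nat \<Rightarrow> (nat \<Rightarrow> nat \<Rightarrow> real) \<Rightarrow> (nat \<Rightarrow> nat \<Rightarrow> real) \<Rightarrow> nat \<Rightarrow> real" where
  "step_weight K t pol r = t (r div K + 1) (r mod K + 1) * pol (r div K + 1) (r mod K + 1)"

definition cum_weight :: "nat \<Rightarrow> (nat \<Rightarrow> nat \<Rightarrow> real) \<Rightarrow> (nat \<Rightarrow> nat \<Rightarrow> real) \<Rightarrow> nat \<Rightarrow> real" where
  "cum_weight K t pol r = (\<Sum>m\<le>r. prefix_prod K t pol m)"

lemma prefix_prod_eq_prod_step_weight: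
  "prefix_prod K t pol m = (\<Prod>r<m. step_weight K t pol r)"
  by (induction m) (simp_all add: prefix_prod_def step_weight_def)

lemma d_par_eq_cum_weight: "d_par K t pol j = cum_weight K t pol ((j - 1) * K)"
  by (simp add: d_par_def cum_weight_def atLeast0AtMost)

lemma row_col_mem:
  fixes r n K :: nat
  assumes "r < n * K"
  shows "r div K + 1 \<in> {1..n}" and "r mod K + 1 \<in> {1..K}"
proof -
  have "0 < K" using assms by (cases K) auto
  then show "r mod K + 1 \<in> {1..K}" by (simp add: Suc_le_eq)
  show "r div K + 1 \<in> {1..n}" using assms by (simp add: Suc_le_eq less_mult_imp_div_less)
qed

lemma row_col_of_index:
  fixes j i K :: nat
  assumes "1 \<le> j" and "i \<in> {1..K}"
  shows "((j - 1) * K + i - 1) div K + 1 = j" and "((j - 1) * K + i - 1) mod K + 1 = i"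
proof -
  obtain i' where i': "i = Suc i'" "i' < K" using assms(2) by (cases i) auto
  then have "(j - 1) * K + i - 1 = i' + (j - 1) * K" by simp
  then show "((j - 1) * K + i - 1) div K + 1 = j" and "((j - 1) * K + i - 1) mod K + 1 = i"
    using assms(1) i' by auto
qed

lemma sum_lessThan_mult_row_col:
  fixes n K :: nat
  shows "(\<Sum>r<n * K. f (r div K + 1) (r mod K + 1)) = (\<Sum>j=1..n. \<Sum>i=1..K. (f j i :: real))"
proof (induction n)
  case (Suc n)
  let ?g = "\<lambda>r. f (r div K + 1) (r mod K + 1)"
  have "(\<Sum>r<Suc n * K. ?g r) = (\<Sum>r<n * K. ?g r) + (\<Sum>r\<in>{0 + n * K..<K + n * K}. ?g r)"
    by (simp add: lessThan_atLeast0 sum.atLeastLessThan_concat add.commute[of K])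
  also have "(\<Sum>r\<in>{0 + n * K..<K + n * K}. ?g r) = (\<Sum>i<K. f (Suc n) (i + 1))"
    unfolding sum.shift_bounds_nat_ivl lessThan_atLeast0 by (intro sum.cong) auto
  also have "(\<Sum>i<K. f (Suc n) (i + 1)) = (\<Sum>i=1..K. f (Suc n) i)"
    by (simp add: sum.atLeast1_atMost_eq)
  finally show ?case using Suc by simp
qed simp

lemma step_weight_nonneg:
  assumes "\<forall>j\<in>{1..n}. \<forall>i\<in>{1..K}. 0 \<le> t j i * pol j i" and "r < n * K"
  shows "0 \<le> step_weight K t pol r"
  using assms row_col_mem[OF assms(2)] by (simp add: step_weight_def)

lemma one_le_cum_weight:
  assumes "\<forall>j\<in>{1..n}. \<forall>i\<in>{1..K}. 0 \<le> t j i * pol j i" and "r \<le> n * K"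
  shows "1 \<le> cum_weight K t pol r"
  unfolding cum_weight_def prefix_prod_eq_prod_step_weight
  using assms(2) by (intro one_le_sum_prod_lessThan) (auto intro!: step_weight_nonneg[OF assms(1)])

lemma prefix_prod_nonneg:
  assumes "\<forall>j\<in>{1..n}. \<forall>i\<in>{1..K}. 0 \<le> t j i * pol j i" and "m \<le> n * K"
  shows "0 \<le> prefix_prod K t pol m"
  unfolding prefix_prod_eq_prod_step_weight
  using assms(2) by (intro prod_nonneg) (auto intro!: step_weight_nonneg[OF assms(1)])

lemma prefix_prod_cong:
  assumes "\<forall>j\<in>{1..n}. \<forall>i\<in>{1..K}. pol j i = pol' j i" and "m \<le> n * K"
  shows "prefix_prod K t pol m = prefix_prod K t pol' m"
  unfolding prefix_prod_eq_prod_step_weight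
  using assms row_col_mem[of _ n K] by (intro prod.cong) (auto simp: step_weight_def)

lemma prefix_prod_block:
  assumes "1 \<le> j" and "i \<le> K"
  shows "prefix_prod K t pol ((j - 1) * K + i)
           = prefix_prod K t pol ((j - 1) * K) * (\<Prod>l=1..i. t j l * pol j l)"
  using assms(2)
proof (induction i)
  case (Suc i)
  have "step_weight K t pol ((j - 1) * K + i) = t j (Suc i) * pol j (Suc i)"
    using row_col_of_index[OF assms(1), of "Suc i" K] Suc.prems by (simp add: step_weight_def)
  then show ?case
    using Suc by (simp add: prefix_prod_eq_prod_step_weight mult.assoc)
qed simp

lemma renewal_matrix_chain:
  assumes "valid_policy U K pol" and "1 \<le> U"
  shows "renewal_matrix (U * K) (step_weight K t pol) (chain U K t pol)"
  unfolding renewal_matrix_def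
proof (intro conjI allI impI)
  fix n assume n: "n < U * K"
  note rc = row_col_mem[OF n]
  show "chain U K t pol n (Suc n) = step_weight K t pol n"
  proof -
    have "chain U K t pol n (Suc n)
        = (\<Sum>a\<in>{1..K}. if a = n mod K + 1 then step_weight K t pol n else 0)"
      unfolding chain_def sense_def trans_def step_weight_def using n by (intro sum.cong) auto
    then show ?thesis using rc(2) by simp
  qed
  show "chain U K t pol n 0 = 1 - step_weight K t pol n"
  proof -
    have "chain U K t pol n 0 = (\<Sum>a\<in>{1..K}. pol (n div K + 1) a
            - (if a = n mod K + 1 then step_weight K t pol n else 0))"
      unfolding chain_def sense_def trans_def step_weight_def using n
      by (intro sum.cong) (auto simp: algebra_simps)
    then show ?thesis
      using rc assms(1) by (simp add: valid_policy_def sum_subtractf)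
  qed
next
  show "chain U K t pol (U * K) 0 = 1"
    using assms by (simp add: chain_def sense_def trans_def valid_policy_def)
next
  fix n m assume "n \<le> U * K" "m \<noteq> 0" "m \<noteq> Suc n"
  then show "chain U K t pol n m = 0"
    unfolding chain_def sense_def trans_def by (intro sum.neutral) auto
qed

lemma avg_reward_eq_renewal_distribution:
  assumes "valid_policy U K pol" and "1 \<le> U" and "\<forall>j\<in>{1..U}. \<forall>i\<in>{1..K}. 0 \<le> t j i"
  shows "avg_reward U K t pol = renewal_distribution (U * K) (step_weight K t pol) (U * K)"
proof -
  let ?M = "chain U K t pol" and ?x = "step_weight K t pol"
  have M: "renewal_matrix (U * K) ?x ?M" using assms(1,2) by (rule renewal_matrix_chain)
  have "\<forall>j\<in>{1..U}. \<forall>i\<in>{1..K}. 0 \<le> t j i * pol j i"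
    using assms(1,3) by (simp add: valid_policy_def)
  then have x: "\<forall>n<U * K. 0 \<le> ?x n" using step_weight_nonneg by blast
  have "is_stationary U K t pol = stationary_distribution (U * K) ?M"
    by (simp add: fun_eq_iff is_stationary_def stationary_distribution_def)
  also have "\<dots> = (\<lambda>p. p = renewal_distribution (U * K) ?x)"
    using stationary_renewal_distribution[OF M x] stationary_distribution_renewal_unique[OF M x]
    by blast
  finally have "stat_dist U K t pol = renewal_distribution (U * K) ?x"
    unfolding stat_dist_def by simp
  then show ?thesis by (simp add: avg_reward_def)
qed

section \<open>The optimal policy\<close>

definition opt_row :: "nat \<Rightarrow> (nat \<Rightarrow> nat \<Rightarrow> real) \<Rightarrow> (nat \<Rightarrow> nat \<Rightarrow> real) \<Rightarrow> (nat \<Rightarrow> real) \<Rightarrow> nat \<Rightarrow> bool" where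
  "opt_row K t pol c j \<longleftrightarrow>
     0 < c j \<and>
     (\<forall>i\<in>{1..K}. pol j i = block_row (t j) (d_par K t pol j) (e_par K t pol j) (c j) i) \<and>
     (\<Sum>i=1..K. pol j i) = 1"

lemma opt_rec_iff_opt_row:
  assumes "1 \<le> K"
  shows "opt_rec U K t pol c \<longleftrightarrow> (\<forall>j\<in>{1..U}. opt_row K t pol c j)"
proof -
  have "(0 < c j \<and> pol j 1 = c j * d_par K t pol j \<and>
          (\<forall>i\<in>{2..K}. pol j i = pol j (i - 1)
             + c j * e_par K t pol j * (\<Prod>l\<in>{1..i - 1}. t j l * pol j l)) \<and>
          (\<Sum>i=1..K. pol j i) = 1) \<longleftrightarrow> opt_row K t pol c j" for j
    using block_row_if_block_recursion[of "pol j" "c j" "d_par K t pol j" K "e_par K t pol j" "t j"]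
      block_recursion_if_block_row[OF assms, of "pol j" "t j" "d_par K t pol j" "e_par K t pol j" "c j"]
    unfolding opt_row_def by blast
  then show ?thesis unfolding opt_rec_def by blast
qed

lemma d_par_e_par_bounds:
  assumes "\<forall>j'\<in>{1..j - 1}. \<forall>i\<in>{1..K}. 0 \<le> t j' i * pol j' i"
  shows "1 \<le> d_par K t pol j" and "0 \<le> e_par K t pol j"
  using one_le_cum_weight[OF assms] prefix_prod_nonneg[OF assms]
  by (simp_all add: d_par_eq_cum_weight e_par_def)

lemma d_par_e_par_cong:
  assumes "\<forall>j'\<in>{1..j - 1}. \<forall>i\<in>{1..K}. pol j' i = pol' j' i"
  shows "d_par K t pol j = d_par K t pol' j" and "e_par K t pol j = e_par K t pol' j"
  using prefix_prod_cong[OF assms] by (simp_all add: d_par_def e_par_def)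

lemma opt_row_cong:
  assumes "\<forall>j'\<in>{1..j}. \<forall>i\<in>{1..K}. pol j' i = pol' j' i" and "c j = c' j" and "1 \<le> j"
  shows "opt_row K t pol c j \<longleftrightarrow> opt_row K t pol' c' j"
proof -
  have "\<forall>j'\<in>{1..j - 1}. \<forall>i\<in>{1..K}. pol j' i = pol' j' i" using assms(1) by auto
  note de = d_par_e_par_cong[OF this]
  have "\<forall>i\<in>{1..K}. pol j i = pol' j i" using assms(1,3) by auto
  then show ?thesis using assms(2) unfolding opt_row_def de by simp
qed

lemma opt_rows_pos:
  assumes "\<forall>j\<in>{1..U}. \<forall>i\<in>{1..K}. 0 < t j i" and "\<forall>j\<in>{1..U}. opt_row K t pol c j"
  shows "\<forall>j\<in>{1..U}. \<forall>i\<in>{1..K}. 0 < pol j i"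
  using assms
proof (induction U)
  case (Suc U)
  then have rows: "\<forall>j\<in>{1..U}. \<forall>i\<in>{1..K}. 0 < pol j i" by simp
  have "\<forall>j'\<in>{1..Suc U - 1}. \<forall>i\<in>{1..K}. 0 \<le> t j' i * pol j' i"
    using rows Suc.prems(1) by (simp add: less_imp_le)
  note de = d_par_e_par_bounds[OF this]
  have "0 < pol (Suc U) i" if "i \<in> {1..K}" for i
  proof -
    have "opt_row K t pol c (Suc U)" using Suc.prems(2) by simp
    then have "pol (Suc U) i = block_row (t (Suc U)) (d_par K t pol (Suc U))
                 (e_par K t pol (Suc U)) (c (Suc U)) i" and "0 < c (Suc U)"
      using that by (simp_all add: opt_row_def)
    moreover have "\<forall>l\<in>{1..K}. 0 < t (Suc U) l" using Suc.prems(1) by simp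
    then have "\<forall>l\<in>{1..i - 1}. 0 \<le> t (Suc U) l" using that by (auto intro!: less_imp_le)
    ultimately show ?thesis using de by (simp add: block_row_pos)
  qed
  then show ?case using rows by (auto simp: le_Suc_eq)
qed simp

lemma opt_rows_valid_policy:
  assumes "\<forall>j\<in>{1..U}. \<forall>i\<in>{1..K}. 0 < t j i" and "\<forall>j\<in>{1..U}. opt_row K t pol c j"
  shows "valid_policy U K pol"
  using opt_rows_pos[OF assms] assms(2)
  by (auto simp: valid_policy_def opt_row_def less_imp_le)

lemma ex_opt_rows:
  assumes "\<forall>j\<in>{1..U}. \<forall>i\<in>{1..K}. 0 < t j i" and "1 \<le> K"
  shows "\<exists>pol c. \<forall>j\<in>{1..U}. opt_row K t pol c j"
  using assms(1)
proof (induction U)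
  case 0
  show ?case by simp
next
  case (Suc U)
  then obtain pol c where opt: "\<forall>j\<in>{1..U}. opt_row K t pol c j" by auto
  have t: "\<forall>j\<in>{1..U}. \<forall>i\<in>{1..K}. 0 < t j i" using Suc.prems by simp
  have "\<forall>j'\<in>{1..Suc U - 1}. \<forall>i\<in>{1..K}. 0 \<le> t j' i * pol j' i"
    using opt_rows_pos[OF t opt] t by (simp add: less_imp_le)
  note de = d_par_e_par_bounds[OF this]
  define D where "D = d_par K t pol (Suc U)"
  define E where "E = e_par K t pol (Suc U)"
  have "\<forall>l\<in>{1..K}. 0 \<le> t (Suc U) l" using Suc.prems by (simp add: less_imp_le)
  then obtain c' where c': "0 < c'" "block_sum K (t (Suc U)) D E c' = 1"
    using ex1_block_sum_eq_1[of D E K "t (Suc U)"] de assms(2) unfolding D_def E_def by auto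
  define pol' where "pol' = pol(Suc U := block_row (t (Suc U)) D E c')"
  define c'' where "c'' = c(Suc U := c')"
  have agree: "\<forall>j'\<in>{1..U}. \<forall>i\<in>{1..K}. pol' j' i = pol j' i" by (simp add: pol'_def)
  have "opt_row K t pol' c'' j" if "j \<in> {1..Suc U}" for j
  proof (cases "j = Suc U")
    case True
    have "d_par K t pol' (Suc U) = D" and "e_par K t pol' (Suc U) = E"
      using d_par_e_par_cong[of "Suc U" K pol' pol t] agree by (simp_all add: D_def E_def)
    then show ?thesis
      using True c' by (simp add: opt_row_def pol'_def c''_def block_sum_def)
  next
    case False
    then have "j \<in> {1..U}" using that by simp
    then show ?thesis
      using opt opt_row_cong[of j K pol' pol c'' c t] agree by (simp add: c''_def)
  qed
  then show ?case by blast
qed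

lemma opt_rows_unique:
  assumes "\<forall>j\<in>{1..U}. \<forall>i\<in>{1..K}. 0 < t j i" and "1 \<le> K"
    and "\<forall>j\<in>{1..U}. opt_row K t pol c j" and "\<forall>j\<in>{1..U}. opt_row K t pol' c' j"
  shows "\<forall>j\<in>{1..U}. c j = c' j \<and> (\<forall>i\<in>{1..K}. pol j i = pol' j i)"
  using assms(1,3,4)
proof (induction U)
  case (Suc U)
  then have IH: "\<forall>j\<in>{1..U}. c j = c' j \<and> (\<forall>i\<in>{1..K}. pol j i = pol' j i)" by simp
  have t: "\<forall>j\<in>{1..U}. \<forall>i\<in>{1..K}. 0 < t j i" using Suc.prems(1) by simp
  have "\<forall>j'\<in>{1..Suc U - 1}. \<forall>i\<in>{1..K}. 0 \<le> t j' i * pol j' i"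
    using opt_rows_pos[OF t, of pol c] Suc.prems t by (simp add: less_imp_le)
  note de = d_par_e_par_bounds[OF this]
  define D where "D = d_par K t pol (Suc U)"
  define E where "E = e_par K t pol (Suc U)"
  have "d_par K t pol' (Suc U) = D" and "e_par K t pol' (Suc U) = E"
    using d_par_e_par_cong[of "Suc U" K pol pol' t] IH by (simp_all add: D_def E_def)
  then have row: "pol (Suc U) i = block_row (t (Suc U)) D E (c (Suc U)) i"
    "pol' (Suc U) i = block_row (t (Suc U)) D E (c' (Suc U)) i" if "i \<in> {1..K}" for i
    using Suc.prems(2,3) that by (simp_all add: opt_row_def D_def E_def)
  have "opt_row K t pol c (Suc U)" "opt_row K t pol' c' (Suc U)" using Suc.prems(2,3) by simp_all
  then have c: "0 < c (Suc U)" "0 < c' (Suc U)"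
    and sums: "(\<Sum>i=1..K. pol (Suc U) i) = 1" "(\<Sum>i=1..K. pol' (Suc U) i) = 1"
    unfolding opt_row_def by blast+
  have "block_sum K (t (Suc U)) D E (c (Suc U)) = (\<Sum>i=1..K. pol (Suc U) i)"
    "block_sum K (t (Suc U)) D E (c' (Suc U)) = (\<Sum>i=1..K. pol' (Suc U) i)"
    unfolding block_sum_def using row by (auto intro: sum.cong)
  then have "block_sum K (t (Suc U)) D E (c (Suc U)) = 1" "block_sum K (t (Suc U)) D E (c' (Suc U)) = 1"
    using sums by simp_all
  moreover have "\<forall>l\<in>{1..K}. 0 \<le> t (Suc U) l" using Suc.prems(1) by (simp add: less_imp_le)
  ultimately have "c (Suc U) = c' (Suc U)"
    using ex1_block_sum_eq_1[of D E K "t (Suc U)"] c de assms(2) unfolding D_def E_def by auto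
  then show ?case using IH row by (auto simp: le_Suc_eq)
qed simp

lemma opt_row_eq_cum_weight:
  assumes "1 \<le> j" and "opt_row K t pol c j" and "i \<in> {1..K}"
  shows "pol j i = c j * cum_weight K t pol ((j - 1) * K + i - 1)"
proof -
  let ?b = "(j - 1) * K"
  let ?s = "block_state (t j) (d_par K t pol j) (e_par K t pol j) (c j)"
  have row: "\<forall>l\<in>{1..K}. pol j l = block_row (t j) (d_par K t pol j) (e_par K t pol j) (c j) l"
    using assms(2) by (simp add: opt_row_def)
  have fst_eq: "l < K \<Longrightarrow> fst (?s l) = cum_weight K t pol (?b + l)" for l
  proof (induction l)
    case 0
    show ?case by (simp add: d_par_eq_cum_weight)
  next
    case (Suc l)
    have "snd (?s (Suc l)) = (\<Prod>m=1..Suc l. t j m * pol j m)"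
      by (rule block_state_snd_eq) (use row Suc.prems in auto)
    then have "e_par K t pol j * snd (?s (Suc l)) = prefix_prod K t pol (?b + Suc l)"
      using prefix_prod_block[OF assms(1), of "Suc l" K t pol] Suc.prems by (simp add: e_par_def)
    moreover have "cum_weight K t pol (?b + Suc l)
                     = cum_weight K t pol (?b + l) + prefix_prod K t pol (?b + Suc l)"
      by (simp add: cum_weight_def)
    ultimately show ?case
      using Suc by (simp add: block_state_Suc(2))
  qed
  obtain i' where i': "i = Suc i'" "i' < K" using assms(3) by (cases i) auto
  have "pol j i = c j * fst (?s i')" using row assms(3) i'(1) by (simp add: block_row_def)
  then show ?thesis using fst_eq[OF i'(2)] i'(1) by simp
qed

lemma opt_rows_first_order:
  assumes t: "\<forall>j\<in>{1..U}. \<forall>i\<in>{1..K}. 0 < t j i"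
    and opt: "\<forall>j\<in>{1..U}. opt_row K t pol c j" and val': "valid_policy U K pol'"
    and pos': "\<forall>r<U * K. 0 < step_weight K t pol' r"
  shows "(\<Sum>r<U * K. cum_weight K t pol r * ln (step_weight K t pol' r / step_weight K t pol r)) \<le> 0"
proof -
  have pos: "\<forall>j\<in>{1..U}. \<forall>i\<in>{1..K}. 0 < pol j i" by (rule opt_rows_pos[OF t opt])
  have "cum_weight K t pol r * ln (step_weight K t pol' r / step_weight K t pol r)
        \<le> (pol' (r div K + 1) (r mod K + 1) - pol (r div K + 1) (r mod K + 1)) / c (r div K + 1)"
    if r: "r < U * K" for r
  proof -
    define j where "j = r div K + 1"
    define i where "i = r mod K + 1"
    have ji: "j \<in> {1..U}" "i \<in> {1..K}" using row_col_mem[OF r] by (simp_all add: j_def i_def)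
    have "(j - 1) * K + i - 1 = r" by (simp add: j_def i_def)
    then have pol_eq: "pol j i = c j * cum_weight K t pol r"
      using opt_row_eq_cum_weight[of j K t pol c i] ji opt by simp
    have c: "0 < c j" using opt ji by (simp add: opt_row_def)
    have sw: "step_weight K t pol r = t j i * pol j i" "step_weight K t pol' r = t j i * pol' j i"
      by (simp_all add: step_weight_def j_def i_def)
    have "0 < pol j i" "0 < t j i" using pos t ji by auto
    moreover have "0 < t j i * pol' j i" using pos' r unfolding sw(2)[symmetric] by blast
    ultimately have "0 < pol' j i" by (simp add: zero_less_mult_iff)
    have "cum_weight K t pol r * ln (step_weight K t pol' r / step_weight K t pol r)
          = cum_weight K t pol r * ln (pol' j i / pol j i)"
      using \<open>0 < t j i\<close> by (simp add: sw)
    also have "\<dots> \<le> (pol' j i - pol j i) / c j"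
      using c \<open>0 < pol j i\<close> \<open>0 < pol' j i\<close> pol_eq by (rule mult_ln_ratio_le_diff_div)
    finally show ?thesis by (simp add: j_def i_def)
  qed
  then have "(\<Sum>r<U * K. cum_weight K t pol r * ln (step_weight K t pol' r / step_weight K t pol r))
      \<le> (\<Sum>r<U * K. (pol' (r div K + 1) (r mod K + 1) - pol (r div K + 1) (r mod K + 1))
                        / c (r div K + 1))"
    by (intro sum_mono) simp
  also have "\<dots> = (\<Sum>j=1..U. \<Sum>i=1..K. (pol' j i - pol j i) / c j)"
    by (rule sum_lessThan_mult_row_col)
  also have "\<dots> = (\<Sum>j=1..U. ((\<Sum>i=1..K. pol' j i) - (\<Sum>i=1..K. pol j i)) / c j)"
    by (intro sum.cong refl) (simp only: diff_divide_distrib sum_subtractf sum_divide_distrib)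
  also have "\<dots> = 0"
    using val' opt_rows_valid_policy[OF t opt] by (simp add: valid_policy_def)
  finally show ?thesis .
qed

lemma opt_rows_avg_reward_max:
  assumes t: "\<forall>j\<in>{1..U}. \<forall>i\<in>{1..K}. 0 < t j i" and "1 \<le> U"
    and opt: "\<forall>j\<in>{1..U}. opt_row K t pol c j" and val': "valid_policy U K pol'"
  shows "avg_reward U K t pol' \<le> avg_reward U K t pol"
proof -
  let ?x = "step_weight K t pol" and ?y = "step_weight K t pol'"
  have t0: "\<forall>j\<in>{1..U}. \<forall>i\<in>{1..K}. 0 \<le> t j i" using t by (simp add: less_imp_le)
  have val: "valid_policy U K pol" by (rule opt_rows_valid_policy[OF t opt])
  have R: "avg_reward U K t pol = renewal_distribution (U * K) ?x (U * K)"
    and R': "avg_reward U K t pol' = renewal_distribution (U * K) ?y (U * K)"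
    using avg_reward_eq_renewal_distribution[OF _ \<open>1 \<le> U\<close> t0] val val' by simp_all
  have x: "\<forall>r<U * K. 0 < ?x r"
    using opt_rows_pos[OF t opt] t row_col_mem by (simp add: step_weight_def)
  have y: "\<forall>r<U * K. 0 \<le> ?y r"
    using val' t0 row_col_mem by (simp add: step_weight_def valid_policy_def)
  have R_pos: "0 < renewal_distribution (U * K) ?x (U * K)"
    using x by (simp add: renewal_distribution_pos)
  show ?thesis
  proof (cases "\<exists>r<U * K. ?y r = 0")
    case True
    then have "renewal_distribution (U * K) ?y (U * K) = 0"
      by (auto simp: renewal_distribution_def)
    then show ?thesis
      using R R' R_pos by simp
  next
    case False
    then have y: "\<forall>r<U * K. 0 < ?y r" using y by (simp add: order.order_iff_strict)
    have "(\<Sum>r<U * K. (\<Sum>m\<le>r. \<Prod>k<m. ?x k) * ln (?y r / ?x r)) \<le> 0"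
      using opt_rows_first_order[OF t opt val' y]
      by (simp add: cum_weight_def prefix_prod_eq_prod_step_weight)
    moreover have "0 < (\<Sum>m\<le>U * K. \<Prod>k<m. ?x k)"
      using one_le_sum_prod_lessThan[of "U * K" ?x] x by (simp add: less_imp_le)
    ultimately have "(\<Sum>r<U * K. (\<Sum>m\<le>r. \<Prod>k<m. ?x k) * ln (?y r / ?x r))
                     / (\<Sum>m\<le>U * K. \<Prod>k<m. ?x k) \<le> 0"
      by (rule divide_nonpos_pos)
    then have "ln (renewal_distribution (U * K) ?y (U * K)) \<le> ln (renewal_distribution (U * K) ?x (U * K))"
      using ln_renewal_distribution_le_tangent[OF x y] by linarith
    then show ?thesis
      using R R' R_pos renewal_distribution_pos[OF y, of "U * K"] by simp
  qed
qed

theorem proposition13: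
  fixes U K :: nat and t :: "nat \<Rightarrow> nat \<Rightarrow> real"
  assumes "1 \<le> U" and "1 \<le> K"
    and "\<forall>j\<in>{1..U}. \<forall>i\<in>{1..K}. 0 < t j i \<and> t j i \<le> 1"
  shows "(\<exists>pol c. opt_rec U K t pol c)
       \<and> (\<forall>pol c pol' c'. opt_rec U K t pol c \<and> opt_rec U K t pol' c' \<longrightarrow>
            (\<forall>j\<in>{1..U}. c j = c' j \<and> (\<forall>i\<in>{1..K}. pol j i = pol' j i)))
       \<and> (\<forall>pol c. opt_rec U K t pol c \<longrightarrow>
            valid_policy U K pol \<and>
            (\<forall>pol'. valid_policy U K pol' \<longrightarrow> avg_reward U K t pol' \<le> avg_reward U K t pol))"
proof -
  have t: "\<forall>j\<in>{1..U}. \<forall>i\<in>{1..K}. 0 < t j i" using assms(3) by blast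
  show ?thesis
    unfolding opt_rec_iff_opt_row[OF assms(2)]
    using ex_opt_rows[OF t assms(2)] opt_rows_unique[OF t assms(2)]
      opt_rows_valid_policy[OF t] opt_rows_avg_reward_max[OF t assms(1)]
    by blast
qed

end
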